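(* Let $\kappa$ be a regular infinite cardinal and $A,B$ Boolean algebras with $A$ a subalgebra of $B$. If $A$ is complete (not necessarily a complete subalgebra of $B$) and $B$ has the $\kappa$-FN, then $A$ has the $\kappa$-FN.
   Context: For an infinite cardinal $\kappa$, a Boolean algebra $B$ has the $\kappa$-Freese–Nation property ($\kappa$-FN) if there is a map $f:B\to[B]^{<\kappa}$ such that for all $a,b\in B$ with $a\le b$ there is $c\in f(a)\cap f(b)$ with $a\le c\le b$. *)

theory Defs
  imports Main
begin

text \<open>The ambient Boolean algebra B is a type of class boolean_algebra (B = UNIV).\<close>

definition bool_subalgebra :: "'a::boolean_algebra set \<Rightarrow> bool" where
  "bool_subalgebra A \<longleftrightarrow> bot \<in> A \<and> top \<in> A \<and>
     (\<forall>x\<in>A. \<forall>y\<in>A. sup x y \<in> A \<and> inf x y \<in> A) \<and> (\<forall>x\<in>A. - x \<in> A)"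

text \<open>A subalgebra A is complete (as a Boolean algebra in its own right): every subset
  of A has a least upper bound in A with respect to the induced order. This supremum
  need not be the supremum in B.\<close>

definition complete_subalg :: "'a::boolean_algebra set \<Rightarrow> bool" where
  "complete_subalg A \<longleftrightarrow> (\<forall>X\<subseteq>A. \<exists>s\<in>A. (\<forall>x\<in>X. x \<le> s) \<and>
       (\<forall>t\<in>A. (\<forall>x\<in>X. x \<le> t) \<longrightarrow> s \<le> t))"

text \<open>kappa-Freese-Nation property of the Boolean algebra with carrier A (induced order);
  the cardinal kappa is represented by a cardinal order relation r, and
  [A]^{<kappa} is the set of subsets X of A with |X| <o r.\<close>

definition kappa_FN :: "'k rel \<Rightarrow> 'a::boolean_algebra set \<Rightarrow> bool" where
  "kappa_FN r A \<longleftrightarrow> (\<exists>f. (\<forall>a\<in>A. f a \<subseteq> A \<and> (card_of (f a), r) \<in> ordLess) \<and>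
     (\<forall>a\<in>A. \<forall>b\<in>A. a \<le> b \<longrightarrow> (\<exists>c\<in>f a \<inter> f b. a \<le> c \<and> c \<le> b)))"

end

theory Submission
  imports Defs
begin

text \<open>Sending x to the supremum, computed in A, of the elements of A below x is a monotone
  retraction of B onto A; this is where the completeness of A is used. Composing a
  Freese-Nation map of B with any monotone retraction onto A gives one for A, because
  an interpolant c with a \<le> c \<le> b is moved to one inside A while a and b stay fixed.\<close>

lemma complete_subalg_monotone_retraction:
  fixes A :: "'a::boolean_algebra set"
  assumes "complete_subalg A"
  obtains h where "range h \<subseteq> A" and "mono h" and "\<And>a. a \<in> A \<Longrightarrow> h a = a"
proof -
  have "\<forall>x. \<exists>s\<in>A. (\<forall>a\<in>A. a \<le> x \<longrightarrow> a \<le> s) \<and> (\<forall>t\<in>A. (\<forall>a\<in>A. a \<le> x \<longrightarrow> a \<le> t) \<longrightarrow> s \<le> t)"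
  proof
    fix x
    show "\<exists>s\<in>A. (\<forall>a\<in>A. a \<le> x \<longrightarrow> a \<le> s) \<and> (\<forall>t\<in>A. (\<forall>a\<in>A. a \<le> x \<longrightarrow> a \<le> t) \<longrightarrow> s \<le> t)"
      using assms unfolding complete_subalg_def
      by (drule_tac x = "{a\<in>A. a \<le> x}" in spec) auto
  qed
  then obtain h where h: "\<forall>x. h x \<in> A \<and> (\<forall>a\<in>A. a \<le> x \<longrightarrow> a \<le> h x) \<and>
      (\<forall>t\<in>A. (\<forall>a\<in>A. a \<le> x \<longrightarrow> a \<le> t) \<longrightarrow> h x \<le> t)"
    unfolding Bex_def by (rule choice[THEN exE])
  then have h_in: "\<And>x. h x \<in> A"
    and h_upper: "\<And>x a. a \<in> A \<Longrightarrow> a \<le> x \<Longrightarrow> a \<le> h x"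
    and h_least: "\<And>x t. t \<in> A \<Longrightarrow> (\<forall>a\<in>A. a \<le> x \<longrightarrow> a \<le> t) \<Longrightarrow> h x \<le> t"
    by blast+
  show thesis
  proof
    show "range h \<subseteq> A" using h_in by blast
    show "mono h"
    proof (rule monoI)
      fix x y :: 'a
      assume "x \<le> y"
      then have "\<forall>a\<in>A. a \<le> x \<longrightarrow> a \<le> h y" using h_upper order_trans by blast
      then show "h x \<le> h y" using h_least[OF h_in] by blast
    qed
    show "h a = a" if "a \<in> A" for a
      using h_upper[OF that order_refl] h_least[OF that] by (simp add: order_antisym)
  qed
qed

lemma kappa_FN_monotone_retract:
  fixes A :: "'a::boolean_algebra set"
  assumes "kappa_FN r B" and "A \<subseteq> B" and "h ` B \<subseteq> A" and "mono_on B h"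
    and "\<And>a. a \<in> A \<Longrightarrow> h a = a"
  shows "kappa_FN r A"
proof -
  obtain f where f_small: "\<forall>x\<in>B. f x \<subseteq> B \<and> (card_of (f x), r) \<in> ordLess"
    and f_interpolates: "\<forall>x\<in>B. \<forall>y\<in>B. x \<le> y \<longrightarrow> (\<exists>c\<in>f x \<inter> f y. x \<le> c \<and> c \<le> y)"
    using assms(1) unfolding kappa_FN_def by (elim exE conjE)
  have f_sub: "\<And>x. x \<in> B \<Longrightarrow> f x \<subseteq> B"
    and f_card: "\<And>x. x \<in> B \<Longrightarrow> (card_of (f x), r) \<in> ordLess"
    using f_small by blast+
  show ?thesis unfolding kappa_FN_def
  proof (intro exI[of _ "\<lambda>a. h ` f a"] conjI ballI impI)
    fix a assume "a \<in> A"
    then have "a \<in> B" using assms(2) by blast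
    show "h ` f a \<subseteq> A" using image_mono[OF f_sub[OF \<open>a \<in> B\<close>], of h] assms(3) by (rule order_trans)
    show "(card_of (h ` f a), r) \<in> ordLess"
      using card_of_image f_card[OF \<open>a \<in> B\<close>] by (rule ordLeq_ordLess_trans)
  next
    fix a b assume "a \<in> A" "b \<in> A" "a \<le> b"
    then have "a \<in> B" "b \<in> B" using assms(2) by blast+
    then obtain c where c: "c \<in> f a" "c \<in> f b" "a \<le> c" "c \<le> b"
      using f_interpolates \<open>a \<le> b\<close> by blast
    have "c \<in> B" using f_sub[OF \<open>a \<in> B\<close>] c(1) by blast
    have "h a \<le> h c" using assms(4) \<open>a \<in> B\<close> \<open>c \<in> B\<close> c(3) by (rule mono_onD)
    moreover have "h c \<le> h b" using assms(4) \<open>c \<in> B\<close> \<open>b \<in> B\<close> c(4) by (rule mono_onD)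
    ultimately have "a \<le> h c" "h c \<le> b" using assms(5) \<open>a \<in> A\<close> \<open>b \<in> A\<close> by simp_all
    then show "\<exists>c'\<in>h ` f a \<inter> h ` f b. a \<le> c' \<and> c' \<le> b" using c(1,2) by blast
  qed
qed

theorem lemma6p1:
  fixes r :: "'k rel" and A :: "'a::boolean_algebra set"
  assumes "Cinfinite r" and "regularCard r"
    and "bool_subalgebra A"
    and "complete_subalg A"
    and "kappa_FN r (UNIV :: 'a set)"
  shows "kappa_FN r A"
proof -
  obtain h where "range h \<subseteq> A" "mono h" "\<And>a. a \<in> A \<Longrightarrow> h a = a"
    using complete_subalg_monotone_retraction[OF assms(4)] by blast
  then show ?thesis
    using kappa_FN_monotone_retract[OF assms(5)] by (simp add: mono_imp_mono_on)
qed

end
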